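(* Let $R,S,T\in\mathcal{L}$ with $R\le_\ell T$ and let $\epsilon\ge0$. If there exist nonzero morphisms $k_R\to k_S(\epsilon)$ and $k_S\to k_T(\epsilon)$, then $k_S$ is $\Lambda_\epsilon$-interleaved with $k_R$ or with $k_T$.
   Context: Let $k$ be a field. The bipath poset $B$ has underlying set $(\mathbb{R}\times\{1,2\})\sqcup\{-\infty,+\infty\}$. Its order is: $x\le y$ iff $x=-\infty$, or $y=+\infty$, or $x=(s,i)$, $y=(t,i)$ with the same $i$ and $s\le t$. An interval is a nonempty convex and connected subset. $k_I$ is the interval module (functor $B\to$ $k$-vector spaces, $k$ on $I$ and $0$ elsewhere, identity maps within $I$, zero maps otherwise). For $\epsilon\ge0$, $\Lambda_\epsilon$ sends $(r,i)\mapsto(r+\epsilon,i)$ and fixes $\pm\infty$. Then: - $V(\epsilon)_b=V_{\Lambda_\epsilon b}$ and $V(\epsilon)(b,b')=V(\Lambda_\epsilon b,\Lambda_\epsilon b')$; $\phi(\epsilon)$ has components $\phi_{\Lambda_\epsilon b}$; - $V_{0\to\epsilon}$ has components $V(b,\Lambda_\epsilon b)$; - $V,W$ are $\Lambda_\epsilon$-interleaved if there are $\alpha\colon V\to W(\epsilon)$, $\beta\colon W\to V(\epsilon)$ with $\beta(\epsilon)\alpha=V_{0\to2\epsilon}$ and $\alpha(\epsilon)\beta=W_{0\to2\epsilon}$. Decorated numbers: $\overline{\mathbb{R}}^*=\{r^+,r^-: r\in\mathbb{R}\cup\{\pm\infty\}\}$ with total order $s^\sigma\le_* t^\tau$ iff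 $s<t$, or $s=t$ and $(\sigma,\tau)\in\{(-,-),(-,+),(+,+)\}$. Let $\mathbb{R}^*=\{r^\pm:r\in\mathbb{R}\}$. For $s^\sigma,t^\tau\in\mathbb{R}^*$, $s^\sigma+t^\tau$ is $(s+t)^+$ if $\sigma=\tau=+$ and $(s+t)^-$ otherwise. $\mathcal{L}$ is the set of intervals $\neq B$ containing $-\infty$. Each is uniquely $$\langle s^\sigma,t^\tau\rangle_{\mathcal{L}}=\{-\infty\}\cup\{(r,1):r^+\le_* t^\tau\}\cup\{(r,2):r^+\le_* s^\sigma\}$$ with $s^\sigma,t^\tau\in\mathbb{R}^*\cup\{-\infty^+,+\infty^-\}$. Partition of $\mathcal{L}$: - $\mathcal{L}_1$: both entries $-\infty^+$; - $\mathcal{L}_2$: exactly one entry $-\infty^+$, the other in $\mathbb{R}^*\cup\{+\infty^-\}$; - $\mathcal{L}_3$: both entries in $\mathbb{R}^*$; - $\mathcal{L}_4$: exactly one entry $+\infty^-$, the other in $\mathbb{R}^*$; - $\mathcal{L}_5$: both entries $+\infty^-$. Define $\ell$ by $\ell=-\infty^-$ on $\mathcal{L}_1$, $\max\{s^\sigma,t^\tau\}$ on $\mathcal{L}_2$, $s^\sigma+t^\tau$ on $\mathcal{L}_3$, $\min\{s^\sigma,t^\tau\}$ on $\mathcal{L}_4$, and $+\infty^-$ on $\mathcal{L}_5$. Set $I\le_\ell J$ iff either $I\in\mathcal{L}_i$, $J\in\mathcal{L}_j$ with $i<j$, or $I,J$ lie in the same $\mathcal{L}_i$ and $\ell(I)\le_*\ell(J)$.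 *)

theory Defs
  imports Complex_Main
begin

datatype branch = Br1 | Br2

datatype bp = NInf | Pt real branch | PInf

definition bp_le :: "bp \<Rightarrow> bp \<Rightarrow> bool" where
  "bp_le x y \<longleftrightarrow> x = NInf \<or> y = PInf \<or>
     (\<exists>s t i. x = Pt s i \<and> y = Pt t i \<and> s \<le> t)"

definition is_interval :: "bp set \<Rightarrow> bool" where
  "is_interval I \<longleftrightarrow> I \<noteq> {} \<and>
     (\<forall>x\<in>I. \<forall>y. \<forall>z\<in>I. bp_le x y \<and> bp_le y z \<longrightarrow> y \<in> I) \<and>
     (\<forall>x\<in>I. \<forall>y\<in>I.
        (\<lambda>a b. a \<in> I \<and> b \<in> I \<and> (bp_le a b \<or> bp_le b a))\<^sup>*\<^sup>* x y)"

fun shift :: "real \<Rightarrow> bp \<Rightarrow> bp" where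
  "shift e (Pt r i) = Pt (r + e) i"
| "shift e NInf = NInf"
| "shift e PInf = PInf"

text \<open>A module is given by its spaces V_b (subspaces of the field k, i.e. 0 or k)
  and its structure maps V(b,b') (only relevant for b \<le> b').\<close>
type_synonym 'k pmod = "(bp \<Rightarrow> 'k set) \<times> (bp \<Rightarrow> bp \<Rightarrow> 'k \<Rightarrow> 'k)"

definition sp :: "'k pmod \<Rightarrow> bp \<Rightarrow> 'k set" where "sp V = fst V"
definition mp :: "'k pmod \<Rightarrow> bp \<Rightarrow> bp \<Rightarrow> 'k \<Rightarrow> 'k" where "mp V = snd V"

definition imod :: "bp set \<Rightarrow> 'k::field pmod" where
  "imod I = ((\<lambda>b. if b \<in> I then UNIV else {0}),
             (\<lambda>b b'. if b \<in> I \<and> b' \<in> I then id else (\<lambda>_. 0)))"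

definition shiftmod :: "real \<Rightarrow> 'k pmod \<Rightarrow> 'k pmod" where
  "shiftmod e V = ((\<lambda>b. sp V (shift e b)), (\<lambda>b b'. mp V (shift e b) (shift e b')))"

definition is_mor :: "'k::field pmod \<Rightarrow> 'k pmod \<Rightarrow> (bp \<Rightarrow> 'k \<Rightarrow> 'k) \<Rightarrow> bool" where
  "is_mor V W \<phi> \<longleftrightarrow>
     (\<forall>b. (\<forall>x\<in>sp V b. \<phi> b x \<in> sp W b) \<and>
          (\<forall>x\<in>sp V b. \<forall>y\<in>sp V b. \<phi> b (x + y) = \<phi> b x + \<phi> b y) \<and>
          (\<forall>a. \<forall>x\<in>sp V b. \<phi> b (a * x) = a * \<phi> b x)) \<and>
     (\<forall>b b'. bp_le b b' \<longrightarrow> (\<forall>x\<in>sp V b. \<phi> b' (mp V b b' x) = mp W b b' (\<phi> b x)))"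

definition nonzero_mor :: "'k::field pmod \<Rightarrow> (bp \<Rightarrow> 'k \<Rightarrow> 'k) \<Rightarrow> bool" where
  "nonzero_mor V \<phi> \<longleftrightarrow> (\<exists>b. \<exists>x\<in>sp V b. \<phi> b x \<noteq> 0)"

definition interleaved :: "real \<Rightarrow> 'k::field pmod \<Rightarrow> 'k pmod \<Rightarrow> bool" where
  "interleaved e V W \<longleftrightarrow> (\<exists>\<alpha> \<beta>.
     is_mor V (shiftmod e W) \<alpha> \<and> is_mor W (shiftmod e V) \<beta> \<and>
     (\<forall>b. \<forall>x\<in>sp V b. \<beta> (shift e b) (\<alpha> b x) = mp V b (shift (2 * e) b) x) \<and>
     (\<forall>b. \<forall>x\<in>sp W b. \<alpha> (shift e b) (\<beta> b x) = mp W b (shift (2 * e) b) x))"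

datatype ext = NegInfE | Fin real | PosInfE

fun ext_less :: "ext \<Rightarrow> ext \<Rightarrow> bool" where
  "ext_less NegInfE NegInfE = False"
| "ext_less NegInfE _ = True"
| "ext_less (Fin a) NegInfE = False"
| "ext_less (Fin a) (Fin b) = (a < b)"
| "ext_less (Fin a) PosInfE = True"
| "ext_less PosInfE _ = False"

text \<open>Decorated number r^\<sigma>: pair (r, \<sigma>) with True = +, False = -.\<close>
type_synonym dec = "ext \<times> bool"

definition dle :: "dec \<Rightarrow> dec \<Rightarrow> bool" where
  "dle x y \<longleftrightarrow> ext_less (fst x) (fst y) \<or> (fst x = fst y \<and> (snd x \<longrightarrow> snd y))"

definition dmax :: "dec \<Rightarrow> dec \<Rightarrow> dec" where "dmax x y = (if dle x y then y else x)"
definition dmin :: "dec \<Rightarrow> dec \<Rightarrow> dec" where "dmin x y = (if dle x y then x else y)"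

definition is_fin :: "dec \<Rightarrow> bool" where "is_fin x \<longleftrightarrow> (\<exists>r. fst x = Fin r)"

definition fval :: "dec \<Rightarrow> real" where "fval x = (case fst x of Fin r \<Rightarrow> r | _ \<Rightarrow> 0)"

definition dadd :: "dec \<Rightarrow> dec \<Rightarrow> dec" where
  "dadd x y = (Fin (fval x + fval y), snd x \<and> snd y)"

abbreviation mInfP :: dec where "mInfP \<equiv> (NegInfE, True)"
abbreviation mInfM :: dec where "mInfM \<equiv> (NegInfE, False)"
abbreviation pInfM :: dec where "pInfM \<equiv> (PosInfE, False)"

definition valid_entry :: "dec \<Rightarrow> bool" where
  "valid_entry x \<longleftrightarrow> is_fin x \<or> x = mInfP \<or> x = pInfM"

definition Lset :: "dec \<Rightarrow> dec \<Rightarrow> bp set" where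
  "Lset s t = {NInf} \<union> {Pt r Br1 | r. dle (Fin r, True) t}
                     \<union> {Pt r Br2 | r. dle (Fin r, True) s}"

definition Lfam :: "bp set set" where
  "Lfam = {I. is_interval I \<and> I \<noteq> UNIV \<and> NInf \<in> I}"

definition Lparams :: "bp set \<Rightarrow> dec \<times> dec" where
  "Lparams I = (THE p. valid_entry (fst p) \<and> valid_entry (snd p) \<and> I = Lset (fst p) (snd p))"

definition Lclass_p :: "dec \<Rightarrow> dec \<Rightarrow> nat" where
  "Lclass_p s t =
     (if s = mInfP \<and> t = mInfP then 1
      else if (s = mInfP \<and> (is_fin t \<or> t = pInfM)) \<or> (t = mInfP \<and> (is_fin s \<or> s = pInfM)) then 2
      else if is_fin s \<and> is_fin t then 3
      else if (s = pInfM \<and> is_fin t) \<or> (t = pInfM \<and> is_fin s) then 4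
      else 5)"

definition ell_p :: "dec \<Rightarrow> dec \<Rightarrow> dec" where
  "ell_p s t =
     (if Lclass_p s t = 1 then mInfM
      else if Lclass_p s t = 2 then dmax s t
      else if Lclass_p s t = 3 then dadd s t
      else if Lclass_p s t = 4 then dmin s t
      else pInfM)"

definition Lclass :: "bp set \<Rightarrow> nat" where
  "Lclass I = Lclass_p (fst (Lparams I)) (snd (Lparams I))"

definition ell :: "bp set \<Rightarrow> dec" where
  "ell I = ell_p (fst (Lparams I)) (snd (Lparams I))"

definition le_ell :: "bp set \<Rightarrow> bp set \<Rightarrow> bool" where
  "le_ell I J \<longleftrightarrow> Lclass I < Lclass J \<or> (Lclass I = Lclass J \<and> dle (ell I) (ell J))"

end

theory Submission
  imports Defs
begin

(* An interval in L is determined by two decorated endpoints, one per branch, each encoding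
   a down-set of reals, and Lambda_e-inclusions between such intervals are endpointwise
   comparisons d <= a + e.  A nonzero morphism k_I -> k_J(e) is nonzero at -inf, so
   naturality from -inf forces every b with Lambda_e b in J to lie in I; conversely,
   inclusions in both directions give an e-interleaving by identity-or-zero maps.  Hence
   the hypotheses say S <= R + e and T <= S + e endpointwise, and it suffices to show
   R <= S + e or S <= T + e.  Infinite endpoints propagate along these inequalities: if one
   is present, l(R) <= l(T) compares the remaining endpoints r <= t, and r <= t already
   forces r <= s + e or s <= t + e.  Otherwise all endpoints are finite, l compares the
   sums r1 + r2 <= t1 + t2, and a failure on both sides would make r1 + r2 > t1 + t2. *)

definition dec_downset :: "dec \<Rightarrow> real set" where
  "dec_downset d = {x. dle (Fin x, True) d}"

definition dec_of_downset :: "real set \<Rightarrow> dec" where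
  "dec_of_downset A =
     (if A = {} then mInfP else if A = UNIV then pInfM else (Fin (Sup A), Sup A \<in> A))"

text \<open>\<open>dle_plus e d a\<close> says \<open>d \<le> a + e\<close>, compared through the encoded down-sets.\<close>
definition dle_plus :: "real \<Rightarrow> dec \<Rightarrow> dec \<Rightarrow> bool" where
  "dle_plus e d a \<longleftrightarrow> (\<forall>x. x + e \<in> dec_downset d \<longrightarrow> x \<in> dec_downset a)"

lemma valid_entryE:
  assumes "valid_entry d"
  obtains "d = mInfP" | "d = pInfM" | a s where "d = (Fin a, s)"
  using assms unfolding valid_entry_def is_fin_def by (cases d) auto

lemma dec_downset_Fin: "dec_downset (Fin a, s) = (if s then {..a} else {..<a})"
  by (auto simp: dec_downset_def dle_def)

lemma dec_downset_NegInfE [simp]: "dec_downset (NegInfE, s) = {}"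
  by (simp add: dec_downset_def dle_def)

lemma dec_downset_PosInfE [simp]: "dec_downset (PosInfE, s) = UNIV"
  by (simp add: dec_downset_def dle_def)

lemma mem_dec_downset_Fin [simp]: "x \<in> dec_downset (Fin a, s) \<longleftrightarrow> x < a \<or> x = a \<and> s"
  by (auto simp: dec_downset_Fin)

lemma dec_downset_down_closed: "y \<in> dec_downset d \<Longrightarrow> x \<le> y \<Longrightarrow> x \<in> dec_downset d"
  by (cases d rule: prod.exhaust, rename_tac r s, case_tac r) auto

lemma dec_downset_mono: "dle d d' \<Longrightarrow> dec_downset d \<subseteq> dec_downset d'"
proof -
  have "ext_less a b \<Longrightarrow> ext_less b c \<Longrightarrow> ext_less a c" for a b c
    by (cases a; cases b; cases c) auto
  then show "dle d d' \<Longrightarrow> dec_downset d \<subseteq> dec_downset d'"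
    by (auto simp: dec_downset_def dle_def)
qed

lemma dec_of_downset_dec_downset:
  assumes "valid_entry d"
  shows "dec_of_downset (dec_downset d) = d"
  using assms
proof (cases rule: valid_entryE)
  case (3 a s)
  have "dec_downset d \<noteq> {}" "dec_downset d \<noteq> UNIV"
    using 3 by (auto simp: dec_downset_Fin dest: spec[of _ "a - 1"] spec[of _ "a + 1"])
  then show ?thesis
    using 3 by (auto simp: dec_of_downset_def dec_downset_Fin)
qed (auto simp: dec_of_downset_def)

lemma dec_downset_dec_of_downset:
  assumes down: "\<And>x y. y \<in> A \<Longrightarrow> x \<le> y \<Longrightarrow> x \<in> A"
  shows "valid_entry (dec_of_downset A) \<and> dec_downset (dec_of_downset A) = A"
proof (cases "A = {} \<or> A = UNIV")
  case False
  then obtain z y where z: "z \<notin> A" and y: "y \<in> A" by auto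
  have bdd: "bdd_above A"
    using down z by (meson bdd_aboveI linorder_le_cases)
  have mem_A: "x \<in> A \<longleftrightarrow> x < Sup A \<or> x = Sup A \<and> Sup A \<in> A" for x
  proof
    assume "x \<in> A"
    then show "x < Sup A \<or> x = Sup A \<and> Sup A \<in> A"
      using cSup_upper[OF _ bdd, of x] by (cases "x = Sup A") auto
  next
    assume "x < Sup A \<or> x = Sup A \<and> Sup A \<in> A"
    then show "x \<in> A"
    proof
      assume "x < Sup A"
      then obtain w where "w \<in> A" "x < w"
        using less_cSup_iff[OF _ bdd, of x] y by blast
      then show "x \<in> A" using down less_imp_le by blast
    qed simp
  qed
  then have "dec_downset (Fin (Sup A), Sup A \<in> A) = A"
    by (intro set_eqI) (subst mem_dec_downset_Fin, rule mem_A[symmetric])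
  then show ?thesis
    using False by (simp add: dec_of_downset_def valid_entry_def is_fin_def)
qed (auto simp: dec_of_downset_def valid_entry_def)

lemma dec_downset_inject:
  "valid_entry d \<Longrightarrow> valid_entry d' \<Longrightarrow> dec_downset d = dec_downset d' \<longleftrightarrow> d = d'"
  by (metis dec_of_downset_dec_downset)

lemma dle_plus_refl: "0 \<le> e \<Longrightarrow> dle_plus e d d"
  unfolding dle_plus_def by (auto elim: dec_downset_down_closed)

lemma dle_plus_mInfP_iff: "valid_entry d \<Longrightarrow> dle_plus e d mInfP \<longleftrightarrow> d = mInfP"
proof (erule valid_entryE)
  fix a s assume "d = (Fin a, s)"
  then have "(a - 1 - e) + e \<in> dec_downset d" by simp
  then have "\<not> dle_plus e d mInfP" unfolding dle_plus_def by (metis dec_downset_NegInfE empty_iff)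
  then show ?thesis using \<open>d = (Fin a, s)\<close> by auto
qed (auto simp: dle_plus_def)

lemma dle_plus_pInfM_iff: "valid_entry a \<Longrightarrow> dle_plus e pInfM a \<longleftrightarrow> a = pInfM"
proof (erule valid_entryE)
  fix b s assume "a = (Fin b, s)"
  then have "b + 1 \<notin> dec_downset a" by simp
  then have "\<not> dle_plus e pInfM a" unfolding dle_plus_def by auto
  then show ?thesis using \<open>a = (Fin b, s)\<close> by auto
qed (auto simp: dle_plus_def)

lemma dle_plus_Fin_iff:
  "dle_plus e (Fin a, s) (Fin b, t) \<longleftrightarrow> a - e < b \<or> a - e = b \<and> (s \<longrightarrow> t)"
proof
  assume le: "dle_plus e (Fin a, s) (Fin b, t)"
  have "\<not> b < a - e"
  proof
    assume "b < a - e"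
    then have "(b + (a - e)) / 2 + e < a" "b < (b + (a - e)) / 2" by (simp_all add: field_simps)
    then show False
      using le[unfolded dle_plus_def, rule_format, of "(b + (a - e)) / 2"] by auto
  qed
  moreover have "s \<longrightarrow> t" if "a - e = b"
    using le[unfolded dle_plus_def, rule_format, of b] that by auto
  ultimately show "a - e < b \<or> a - e = b \<and> (s \<longrightarrow> t)" by auto
qed (auto simp: dle_plus_def)

lemma dle_Fin_iff: "dle (Fin a, s) (Fin b, t) \<longleftrightarrow> a < b \<or> a = b \<and> (s \<longrightarrow> t)"
  by (simp add: dle_def)

lemma dadd_Fin: "dadd (Fin a, s) (Fin b, t) = (Fin (a + b), s \<and> t)"
  by (simp add: dadd_def fval_def)

text \<open>If \<open>r\<^sub>i > s\<^sub>i + e\<close> and \<open>s\<^sub>j > t\<^sub>j + e\<close>, adding the hypotheses on the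
  other branch gives \<open>r\<^sub>1 + r\<^sub>2 > t\<^sub>1 + t\<^sub>2\<close>, whether or not \<open>i = j\<close>.\<close>
lemma dle_plus_Fin_chain:
  assumes "0 \<le> e"
    and "dle_plus e (Fin s1, b1) (Fin r1, a1)" "dle_plus e (Fin s2, b2) (Fin r2, a2)"
    and "dle_plus e (Fin t1, c1) (Fin s1, b1)" "dle_plus e (Fin t2, c2) (Fin s2, b2)"
    and "dle (dadd (Fin r2, a2) (Fin r1, a1)) (dadd (Fin t2, c2) (Fin t1, c1))"
  shows "dle_plus e (Fin r1, a1) (Fin s1, b1) \<and> dle_plus e (Fin r2, a2) (Fin s2, b2) \<or>
    dle_plus e (Fin s1, b1) (Fin t1, c1) \<and> dle_plus e (Fin s2, b2) (Fin t2, c2)"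
  using assms unfolding dle_plus_Fin_iff dadd_Fin dle_Fin_iff by smt

lemma dle_plus_between:
  assumes "0 \<le> e" and "dle r t"
  shows "dle_plus e r s \<or> dle_plus e s t"
proof (rule ccontr)
  assume "\<not> ?thesis"
  then obtain x y where x: "x + e \<in> dec_downset r" "x \<notin> dec_downset s"
    and y: "y + e \<in> dec_downset s" "y \<notin> dec_downset t"
    unfolding dle_plus_def by blast
  have "y + e < x"
    using x(2) y(1) dec_downset_down_closed by (meson linorder_not_less)
  then have "y \<in> dec_downset r"
    using x(1) assms(1) dec_downset_down_closed[of "x + e" r y] by simp
  then show False
    using y(2) dec_downset_mono[OF assms(2)] by blast
qed

lemma mem_Lset [simp]:
  "NInf \<in> Lset s t"
  "PInf \<notin> Lset s t"
  "Pt x Br1 \<in> Lset s t \<longleftrightarrow> x \<in> dec_downset t"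
  "Pt x Br2 \<in> Lset s t \<longleftrightarrow> x \<in> dec_downset s"
  by (auto simp: Lset_def dec_downset_def)

lemma Lset_inject:
  assumes "valid_entry s" "valid_entry t" "valid_entry s'" "valid_entry t'"
  shows "Lset s t = Lset s' t' \<longleftrightarrow> s = s' \<and> t = t'"
proof
  assume eq: "Lset s t = Lset s' t'"
  have "dec_downset s = dec_downset s'" "dec_downset t = dec_downset t'"
    using eq by (metis mem_Lset(4) set_eqI, metis mem_Lset(3) set_eqI)
  then show "s = s' \<and> t = t'"
    using assms dec_downset_inject by blast
qed simp

lemma Lparams_Lset:
  assumes "valid_entry s" "valid_entry t"
  shows "Lparams (Lset s t) = (s, t)"
  unfolding Lparams_def
proof (rule the_equality)
  fix p assume "valid_entry (fst p) \<and> valid_entry (snd p) \<and> Lset s t = Lset (fst p) (snd p)"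
  then show "p = (s, t)" using Lset_inject[OF assms] by (cases p) auto
qed (use assms in simp)

lemma Lfam_down_closed:
  assumes "I \<in> Lfam" and "bp_le c c'" and "c' \<in> I"
  shows "c \<in> I"
proof -
  have "is_interval I" "NInf \<in> I" "bp_le NInf c"
    using assms(1) by (auto simp: Lfam_def bp_le_def)
  then show ?thesis
    using assms(2,3) unfolding is_interval_def by blast
qed

lemma Lfam_branch_down_closed: "I \<in> Lfam \<Longrightarrow> Pt y i \<in> I \<Longrightarrow> x \<le> y \<Longrightarrow> Pt x i \<in> I"
  by (erule Lfam_down_closed) (auto simp: bp_le_def)

lemma PInf_notin_Lfam: "I \<in> Lfam \<Longrightarrow> PInf \<notin> I"
  using Lfam_down_closed[of I _ PInf] by (auto simp: Lfam_def bp_le_def)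

lemma Lfam_LsetE:
  assumes I: "I \<in> Lfam"
  obtains s t where "valid_entry s" "valid_entry t" "I = Lset s t"
proof -
  define branch_dec where "branch_dec i = dec_of_downset {r. Pt r i \<in> I}" for i
  have "valid_entry (branch_dec i) \<and> dec_downset (branch_dec i) = {r. Pt r i \<in> I}" for i
    unfolding branch_dec_def
    by (rule dec_downset_dec_of_downset) (auto intro: Lfam_branch_down_closed[OF I])
  moreover have "I = Lset (branch_dec Br2) (branch_dec Br1)"
  proof (rule set_eqI)
    fix c show "c \<in> I \<longleftrightarrow> c \<in> Lset (branch_dec Br2) (branch_dec Br1)"
      using calculation PInf_notin_Lfam[OF I] I
      by (cases c rule: bp.exhaust, simp add: Lfam_def, rename_tac i, case_tac i) auto
  qed
  ultimately show ?thesis using that by blast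
qed

lemma vimage_shift_Lset_subset_iff:
  "shift e -` Lset b2 b1 \<subseteq> Lset a2 a1 \<longleftrightarrow> dle_plus e b1 a1 \<and> dle_plus e b2 a2"
proof
  assume "shift e -` Lset b2 b1 \<subseteq> Lset a2 a1"
  then show "dle_plus e b1 a1 \<and> dle_plus e b2 a2"
    unfolding dle_plus_def by (auto dest: subsetD[of _ _ "Pt _ Br1"] subsetD[of _ _ "Pt _ Br2"])
next
  assume "dle_plus e b1 a1 \<and> dle_plus e b2 a2"
  then have branchwise: "Pt x i \<in> Lset a2 a1" if "Pt (x + e) i \<in> Lset b2 b1" for x i
    using that by (cases i) (auto simp: dle_plus_def)
  show "shift e -` Lset b2 b1 \<subseteq> Lset a2 a1"
  proof
    fix b assume "b \<in> shift e -` Lset b2 b1"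
    then show "b \<in> Lset a2 a1" using branchwise by (cases b) auto
  qed
qed

lemma sp_imod [simp]: "sp (imod I :: 'k::field pmod) b = (if b \<in> I then UNIV else {0})"
  by (simp add: sp_def imod_def)

lemma mp_imod [simp]:
  "mp (imod I :: 'k::field pmod) b b' = (if b \<in> I \<and> b' \<in> I then id else (\<lambda>_. 0))"
  by (simp add: mp_def imod_def)

lemma sp_shiftmod [simp]: "sp (shiftmod e V) b = sp V (shift e b)"
  by (simp add: sp_def shiftmod_def)

lemma mp_shiftmod [simp]: "mp (shiftmod e V) b b' = mp V (shift e b) (shift e b')"
  by (simp add: mp_def shiftmod_def)

lemma shift_shift: "shift e (shift e b) = shift (2 * e) b"
  by (cases b) auto

lemma nonzero_mor_imod_vimage_shift_subset:
  fixes \<phi> :: "bp \<Rightarrow> 'k::field \<Rightarrow> 'k"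
  assumes mor: "is_mor (imod I) (shiftmod e (imod J)) \<phi>"
    and nonzero: "nonzero_mor (imod I) \<phi>"
    and "NInf \<in> I" "NInf \<in> J"
  shows "shift e -` J \<subseteq> I"
proof
  have natural: "\<phi> b' (mp (imod I) b b' x) = mp (shiftmod e (imod J)) b b' (\<phi> b x)"
    if "bp_le b b'" "x \<in> sp (imod I :: 'k pmod) b" for b b' x
    using mor that unfolding is_mor_def by blast
  have from_NInf: "\<phi> c (if c \<in> I then x else 0) = (if shift e c \<in> J then \<phi> NInf x else 0)" for c x
    using natural[of NInf c x] \<open>NInf \<in> I\<close> \<open>NInf \<in> J\<close>
    by (cases "c \<in> I"; cases "shift e c \<in> J") (simp_all add: bp_le_def)
  have zero: "\<phi> c 0 = 0" for c
  proof -
    have "0 \<in> sp (imod I :: 'k pmod) c" by simp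
    then show ?thesis using mor unfolding is_mor_def by (metis mult_zero_left)
  qed
  obtain c x where "x \<in> sp (imod I :: 'k pmod) c" "\<phi> c x \<noteq> 0"
    using nonzero unfolding nonzero_mor_def by blast
  then have "\<phi> NInf x \<noteq> 0"
    using from_NInf[of c x] zero by (auto split: if_splits)
  moreover fix b assume "b \<in> shift e -` J"
  ultimately show "b \<in> I"
    using from_NInf[of b x] zero by (auto split: if_splits)
qed

lemma is_mor_imod_restrict:
  assumes J: "J \<in> Lfam" and sub: "shift e -` J \<subseteq> I"
  shows "is_mor (imod I :: 'k::field pmod) (shiftmod e (imod J)) (\<lambda>b x. if shift e b \<in> J then x else 0)"
  unfolding is_mor_def
proof (intro conjI allI impI ballI)
  fix b b' :: bp and x :: 'k
  assume "bp_le b b'"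
  then have "bp_le (shift e b) (shift e b')"
    by (auto simp: bp_le_def)
  then have "shift e b' \<in> J \<Longrightarrow> shift e b \<in> J"
    by (rule Lfam_down_closed[OF J])
  then show "(if shift e b' \<in> J then mp (imod I :: 'k pmod) b b' x else 0) =
       mp (shiftmod e (imod J)) b b' (if shift e b \<in> J then x else 0)"
    using sub by auto
qed auto

lemma interleaved_imod_if_vimage_shift_subsets:
  assumes "I \<in> Lfam" "J \<in> Lfam" "shift e -` J \<subseteq> I" "shift e -` I \<subseteq> J"
  shows "interleaved e (imod I :: 'k::field pmod) (imod J)"
  unfolding interleaved_def
  using is_mor_imod_restrict[OF assms(2,3)] is_mor_imod_restrict[OF assms(1,4)] assms(3,4)
  by (intro exI conjI) (auto simp: shift_shift[symmetric])

lemma dle_antisym: "dle x y \<Longrightarrow> dle y x \<Longrightarrow> x = y"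
  by (cases x; cases y; rename_tac a s b t; case_tac a; case_tac b) (auto simp: dle_def)

lemma dle_total: "dle x y \<or> dle y x"
  by (cases x; cases y; rename_tac a s b t; case_tac a; case_tac b) (auto simp: dle_def)

lemma Lclass_p_commute: "Lclass_p s t = Lclass_p t s"
  by (auto simp: Lclass_p_def)

lemma dmax_commute: "dmax x y = dmax y x"
  using dle_antisym[of x y] dle_total[of x y] by (auto simp: dmax_def)

lemma dmin_commute: "dmin x y = dmin y x"
  using dle_antisym[of x y] dle_total[of x y] by (auto simp: dmin_def)

lemma ell_p_commute: "ell_p s t = ell_p t s"
  by (auto simp: ell_p_def Lclass_p_commute[of t] dmax_commute dmin_commute dadd_def)

lemma le_ell_Lset:
  assumes "valid_entry r2" "valid_entry r1" "valid_entry t2" "valid_entry t1"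
  shows "le_ell (Lset r2 r1) (Lset t2 t1) \<longleftrightarrow>
    Lclass_p r2 r1 < Lclass_p t2 t1 \<or>
    Lclass_p r2 r1 = Lclass_p t2 t1 \<and> dle (ell_p r2 r1) (ell_p t2 t1)"
  using assms by (simp add: le_ell_def Lclass_def ell_def Lparams_Lset)

lemma Lclass_p_mInfP: "valid_entry x \<Longrightarrow> Lclass_p mInfP x = (if x = mInfP then 1 else 2)"
  by (erule valid_entryE) (auto simp: Lclass_p_def is_fin_def)

lemma ell_p_mInfP: "valid_entry x \<Longrightarrow> x \<noteq> mInfP \<Longrightarrow> ell_p mInfP x = x"
  by (erule valid_entryE) (auto simp: ell_p_def Lclass_p_def is_fin_def dmax_def dle_def)

lemma Lclass_p_pInfM:
  "valid_entry x \<Longrightarrow> x \<noteq> mInfP \<Longrightarrow> Lclass_p pInfM x = (if x = pInfM then 5 else 4)"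
  by (erule valid_entryE) (auto simp: Lclass_p_def is_fin_def)

lemma ell_p_pInfM: "is_fin x \<Longrightarrow> ell_p pInfM x = x"
  by (auto simp: ell_p_def Lclass_p_def is_fin_def dmin_def dle_def)

lemma Lclass_p_ge_3:
  "valid_entry x \<Longrightarrow> valid_entry y \<Longrightarrow> x \<noteq> mInfP \<Longrightarrow> y \<noteq> mInfP \<Longrightarrow> 3 \<le> Lclass_p x y"
  by (erule valid_entryE; erule valid_entryE) (auto simp: Lclass_p_def is_fin_def)

lemma Lclass_p_le_3:
  "valid_entry x \<Longrightarrow> valid_entry y \<Longrightarrow> x \<noteq> pInfM \<Longrightarrow> y \<noteq> pInfM \<Longrightarrow> Lclass_p x y \<le> 3"
  by (erule valid_entryE; erule valid_entryE) (auto simp: Lclass_p_def is_fin_def)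

lemma Lclass_p_eq_3_iff:
  "valid_entry x \<Longrightarrow> valid_entry y \<Longrightarrow> Lclass_p x y = 3 \<longleftrightarrow> is_fin x \<and> is_fin y"
  by (erule valid_entryE; erule valid_entryE) (auto simp: Lclass_p_def is_fin_def)

lemma ell_p_fin: "is_fin x \<Longrightarrow> is_fin y \<Longrightarrow> ell_p x y = dadd x y"
  by (auto simp: ell_p_def Lclass_p_def is_fin_def)

text \<open>The index of an endpoint is its branch: \<open>R = Lset r2 r1\<close>, and likewise for \<open>S\<close>, \<open>T\<close>.\<close>
locale L_endpoint_chain =
  fixes e :: real and r1 r2 s1 s2 t1 t2 :: dec
  assumes nonneg: "0 \<le> e"
    and valid: "valid_entry r1" "valid_entry r2" "valid_entry s1" "valid_entry s2"
      "valid_entry t1" "valid_entry t2"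
    and S_below_R: "dle_plus e s1 r1" "dle_plus e s2 r2"
    and T_below_S: "dle_plus e t1 s1" "dle_plus e t2 s2"
    and ell_le: "le_ell (Lset r2 r1) (Lset t2 t1)"
begin

lemma swap_branches: "L_endpoint_chain e r2 r1 s2 s1 t2 t1"
  using nonneg valid S_below_R T_below_S ell_le
  by unfold_locales (simp_all add: le_ell_Lset Lclass_p_commute[of r1] Lclass_p_commute[of t1]
      ell_p_commute[of r1] ell_p_commute[of t1])

lemma ell_le_params:
  "Lclass_p r2 r1 < Lclass_p t2 t1 \<or>
   Lclass_p r2 r1 = Lclass_p t2 t1 \<and> dle (ell_p r2 r1) (ell_p t2 t1)"
  using ell_le valid by (simp add: le_ell_Lset)

lemma mInfP_propagates:
  "r1 = mInfP \<Longrightarrow> s1 = mInfP \<and> t1 = mInfP" "r2 = mInfP \<Longrightarrow> s2 = mInfP \<and> t2 = mInfP"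
  using valid S_below_R T_below_S by (auto simp: dle_plus_mInfP_iff)

lemma pInfM_propagates:
  "t1 = pInfM \<Longrightarrow> s1 = pInfM \<and> r1 = pInfM" "t2 = pInfM \<Longrightarrow> s2 = pInfM \<and> r2 = pInfM"
  using valid S_below_R T_below_S by (auto simp: dle_plus_pInfM_iff)

lemma chain_mInfP:
  assumes "r2 = mInfP"
  shows "(dle_plus e r1 s1 \<and> dle_plus e r2 s2) \<or> (dle_plus e s1 t1 \<and> dle_plus e s2 t2)"
proof (cases "r1 = mInfP")
  case True
  then show ?thesis using assms mInfP_propagates dle_plus_refl[OF nonneg] by auto
next
  case False
  have "s2 = mInfP" "t2 = mInfP" using assms mInfP_propagates by auto
  have "t1 \<noteq> mInfP \<and> dle r1 t1"
    using ell_le_params valid False assms \<open>t2 = mInfP\<close>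
    by (auto simp: Lclass_p_mInfP ell_p_mInfP split: if_splits)
  then show ?thesis
    using dle_plus_between[OF nonneg, of r1 t1 s1] dle_plus_refl[OF nonneg]
      assms \<open>s2 = mInfP\<close> \<open>t2 = mInfP\<close> by auto
qed

lemma chain_pInfM:
  assumes "t2 = pInfM" "r1 \<noteq> mInfP" "r2 \<noteq> mInfP"
  shows "(dle_plus e r1 s1 \<and> dle_plus e r2 s2) \<or> (dle_plus e s1 t1 \<and> dle_plus e s2 t2)"
proof (cases "t1 = pInfM")
  case True
  then show ?thesis using assms pInfM_propagates dle_plus_refl[OF nonneg] by auto
next
  case False
  have "s2 = pInfM" "r2 = pInfM" using assms pInfM_propagates by auto
  have class_R: "Lclass_p r2 r1 = (if r1 = pInfM then 5 else 4)"
    using Lclass_p_pInfM[OF valid(1) assms(2)] \<open>r2 = pInfM\<close> by simp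
  have "t1 \<noteq> mInfP"
  proof
    assume "t1 = mInfP"
    then have "Lclass_p t2 t1 = 2"
      using Lclass_p_mInfP[of pInfM] assms(1)
      by (simp add: Lclass_p_commute[of pInfM] valid_entry_def)
    then show False using ell_le_params class_R by (simp split: if_splits)
  qed
  then have "is_fin t1" using valid(5) False by (simp add: valid_entry_def)
  then have class_T: "Lclass_p t2 t1 = 4"
    using Lclass_p_pInfM[OF valid(5) \<open>t1 \<noteq> mInfP\<close>] False assms(1) by simp
  then have "r1 \<noteq> pInfM" using ell_le_params class_R by auto
  then have "is_fin r1" using valid(1) assms(2) by (simp add: valid_entry_def)
  then have "dle r1 t1"
    using ell_le_params class_R class_T \<open>r1 \<noteq> pInfM\<close> \<open>is_fin t1\<close> assms(1) \<open>r2 = pInfM\<close>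
    by (simp add: ell_p_pInfM)
  then show ?thesis
    using dle_plus_between[OF nonneg, of r1 t1 s1] dle_plus_refl[OF nonneg]
      assms \<open>s2 = pInfM\<close> \<open>r2 = pInfM\<close> by auto
qed

lemma chain_finite:
  assumes "r1 \<noteq> mInfP" "r2 \<noteq> mInfP" "t1 \<noteq> pInfM" "t2 \<noteq> pInfM"
  shows "(dle_plus e r1 s1 \<and> dle_plus e r2 s2) \<or> (dle_plus e s1 t1 \<and> dle_plus e s2 t2)"
proof -
  have "Lclass_p r2 r1 = 3" "Lclass_p t2 t1 = 3"
    using Lclass_p_ge_3[of r2 r1] Lclass_p_le_3[of t2 t1] ell_le_params valid assms
    by auto
  then have fin: "is_fin r1" "is_fin r2" "is_fin t1" "is_fin t2"
    using valid by (auto simp: Lclass_p_eq_3_iff)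
  have "s1 \<noteq> mInfP" "s2 \<noteq> mInfP"
    using T_below_S dle_plus_mInfP_iff[OF valid(5)] dle_plus_mInfP_iff[OF valid(6)] fin(3,4)
    by (auto simp: is_fin_def)
  moreover have "s1 \<noteq> pInfM" "s2 \<noteq> pInfM"
    using S_below_R dle_plus_pInfM_iff[OF valid(1)] dle_plus_pInfM_iff[OF valid(2)] fin(1,2)
    by (auto simp: is_fin_def)
  ultimately obtain x1 x2 y1 y2 z1 z2 :: real and a1 a2 b1 b2 c1 c2 where
    "r1 = (Fin x1, a1)" "r2 = (Fin x2, a2)" "s1 = (Fin y1, b1)" "s2 = (Fin y2, b2)"
    "t1 = (Fin z1, c1)" "t2 = (Fin z2, c2)"
    using fin valid unfolding valid_entry_def is_fin_def by (metis prod.collapse)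
  moreover have "dle (dadd r2 r1) (dadd t2 t1)"
    using ell_le_params fin \<open>Lclass_p r2 r1 = 3\<close> \<open>Lclass_p t2 t1 = 3\<close>
    by (simp add: ell_p_fin)
  ultimately show ?thesis
    using dle_plus_Fin_chain[OF nonneg, of y1 b1 x1 a1 y2 b2 x2 a2 z1 c1 z2 c2] S_below_R T_below_S
    by simp
qed

lemma R_below_S_or_S_below_T:
  "(dle_plus e r1 s1 \<and> dle_plus e r2 s2) \<or> (dle_plus e s1 t1 \<and> dle_plus e s2 t2)"
proof -
  consider "r2 = mInfP" | "r1 = mInfP"
    | "r1 \<noteq> mInfP" "r2 \<noteq> mInfP" "t2 = pInfM"
    | "r1 \<noteq> mInfP" "r2 \<noteq> mInfP" "t1 = pInfM"
    | "r1 \<noteq> mInfP" "r2 \<noteq> mInfP" "t1 \<noteq> pInfM" "t2 \<noteq> pInfM"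
    by blast
  then show ?thesis
  proof cases
    case 1
    then show ?thesis by (rule chain_mInfP)
  next
    case 2
    then show ?thesis using L_endpoint_chain.chain_mInfP[OF swap_branches] by blast
  next
    case 3
    then show ?thesis using chain_pInfM by blast
  next
    case 4
    then show ?thesis using L_endpoint_chain.chain_pInfM[OF swap_branches] by blast
  next
    case 5
    then show ?thesis by (rule chain_finite)
  qed
qed

end

lemma Lfam_vimage_shift_chain:
  assumes "R \<in> Lfam" "S \<in> Lfam" "T \<in> Lfam" "le_ell R T" "0 \<le> e"
    and "shift e -` S \<subseteq> R" "shift e -` T \<subseteq> S"
  shows "shift e -` R \<subseteq> S \<or> shift e -` S \<subseteq> T"
proof -
  obtain r2 r1 where r: "valid_entry r2" "valid_entry r1" "R = Lset r2 r1"
    using Lfam_LsetE[OF assms(1)] .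
  obtain s2 s1 where s: "valid_entry s2" "valid_entry s1" "S = Lset s2 s1"
    using Lfam_LsetE[OF assms(2)] .
  obtain t2 t1 where t: "valid_entry t2" "valid_entry t1" "T = Lset t2 t1"
    using Lfam_LsetE[OF assms(3)] .
  interpret L_endpoint_chain e r1 r2 s1 s2 t1 t2
    using assms r s t by unfold_locales (simp_all add: vimage_shift_Lset_subset_iff)
  show ?thesis
    using R_below_S_or_S_below_T r s t by (simp add: vimage_shift_Lset_subset_iff)
qed

theorem lemma4p14:
  fixes R S T :: "bp set" and e :: real
  assumes "R \<in> Lfam" and "S \<in> Lfam" and "T \<in> Lfam"
    and "le_ell R T" and "e \<ge> 0"
    and "\<exists>\<phi>. is_mor (imod R :: 'k::field pmod) (shiftmod e (imod S)) \<phi> \<and> nonzero_mor (imod R :: 'k pmod) \<phi>"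
    and "\<exists>\<psi>. is_mor (imod S :: 'k pmod) (shiftmod e (imod T)) \<psi> \<and> nonzero_mor (imod S :: 'k pmod) \<psi>"
  shows "interleaved e (imod S :: 'k pmod) (imod R) \<or> interleaved e (imod S :: 'k pmod) (imod T)"
proof -
  have NInf: "NInf \<in> R" "NInf \<in> S" "NInf \<in> T"
    using assms(1-3) by (simp_all add: Lfam_def)
  have "shift e -` S \<subseteq> R" "shift e -` T \<subseteq> S"
    using assms(6,7) nonzero_mor_imod_vimage_shift_subset NInf by blast+
  then show ?thesis
    using Lfam_vimage_shift_chain[OF assms(1-5)] assms(1-3)
      interleaved_imod_if_vimage_shift_subsets by blast
qed

end
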